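(* Let $p$ be a prime with $p\notin\{2,3,7,43\}$. Then $\{p,2p,6p,42p,1806p\}\subseteq\mathcal{M}_p^{(1)}$.
   Context: For positive integers $k,n$ let $S_k(n)=\sum_{i=1}^{n} i^k$. For an integer $a$, $\mathcal{M}_a$ denotes the set of positive integers $n$ such that $S_n(n)\equiv a\pmod{n}$. For a prime $p$, $\mathcal{M}_p^{(1)}=\{n\in\mathcal{M}_p : p\mid n,\ p^2\nmid n\}$. *)

theory Defs
  imports "HOL-Number_Theory.Number_Theory"
begin

definition S :: "nat \<Rightarrow> nat \<Rightarrow> int" where
  "S k n = (\<Sum>i=1..n. (int i) ^ k)"

definition M :: "int \<Rightarrow> nat set" where
  "M a = {n. n > 0 \<and> [S n n = a] (mod (int n))}"

definition M1 :: "nat \<Rightarrow> nat set" where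
  "M1 p = {n \<in> M (int p). p dvd n \<and> \<not> p^2 dvd n}"

end

theory Submission
  imports Defs "HOL-Computational_Algebra.Squarefree"
begin

text \<open>For a prime \<open>q\<close> dividing \<open>n\<close>, summing in blocks of length \<open>q\<close> gives
  \<open>S\<^sub>n(n) \<equiv> (n/q) S\<^sub>n(q - 1) (mod q)\<close>, and \<open>S\<^sub>n(q - 1)\<close> is \<open>-1\<close> or \<open>0\<close> modulo \<open>q\<close>
  according as \<open>q - 1\<close> divides \<open>n\<close> or not. For \<open>n = m p\<close> with \<open>m \<in> {1, 2, 6, 42, 1806}\<close>
  every prime \<open>q | m\<close> satisfies \<open>q - 1 | m\<close> and \<open>q | m/q + 1\<close>, so \<open>S\<^sub>n(n) \<equiv> -(m/q) p \<equiv> p (mod q)\<close>;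
  for \<open>q = p\<close>, since \<open>p \<notin> {2, 3, 7, 43}\<close>, \<open>p - 1\<close> does not divide \<open>n\<close>, so \<open>S\<^sub>n(n) \<equiv> 0 \<equiv> p (mod p)\<close>. Since \<open>n\<close> is
  squarefree, these congruences combine to \<open>S\<^sub>n(n) \<equiv> p (mod n)\<close>.\<close>

lemma S_prime_pred_dvd:
  assumes q: "prime q" and nd: "\<not> (q - 1) dvd k"
  shows "int q dvd S k (q - 1)"
proof -
  have q1: "q > 1" using q prime_gt_1_nat by blast
  obtain g where "residue_primroot q g" using prime_primitive_root_exists q q1 by blast
  hence cop: "coprime q g" and ordg: "ord q g = q - 1"
    using totient_prime q by (auto simp: residue_primroot_def)
  have ng: "\<not> [g ^ k = 1] (mod q)" using ord_divides ordg nd by metis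
  define f where "f i = (g * i) mod q" for i
  let ?A = "{1..q - 1}"
  have inj: "inj_on f ?A"
  proof
    fix i j assume ij: "i \<in> ?A" "j \<in> ?A" "f i = f j"
    hence "[g * i = g * j] (mod q)" by (simp add: f_def cong_def)
    hence "[i = j] (mod q)" using cop cong_mult_lcancel_nat coprime_commute by blast
    thus "i = j" using ij(1,2) cong_less_modulus_unique_nat by auto
  qed
  have "f ` ?A \<subseteq> ?A"
  proof
    fix x assume "x \<in> f ` ?A"
    then obtain i where i: "i \<in> ?A" "x = f i" by blast
    have "\<not> q dvd g" using cop q1 by (metis coprime_absorb_left nat_dvd_1_iff_1 less_irrefl)
    moreover have "\<not> q dvd i" using i by (auto dest: dvd_imp_le)
    ultimately have "x \<noteq> 0" using i q by (simp add: f_def prime_dvd_mult_iff mod_eq_0_iff_dvd)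
    moreover have "x < q" using i q1 by (simp add: f_def)
    ultimately show "x \<in> ?A" by auto
  qed
  with inj have "bij_betw f ?A ?A" by (simp add: bij_betw_def endo_inj_surj)
  \<comment> \<open>multiplication by a primitive root permutes the units, which scales the sum by \<open>g ^ k \<noteq> 1\<close>\<close>
  hence "S k (q - 1) = (\<Sum>i\<in>?A. int (f i) ^ k)"
    unfolding S_def using sum.reindex_bij_betw[of f ?A ?A "\<lambda>i. int i ^ k"] by simp
  also have "[\<dots> = (\<Sum>i\<in>?A. int (g * i) ^ k)] (mod int q)"
    by (rule cong_sum, rule cong_pow) (simp add: f_def cong_def of_nat_mod)
  also have "(\<Sum>i\<in>?A. int (g * i) ^ k) = int g ^ k * S k (q - 1)"
    by (simp add: S_def power_mult_distrib sum_distrib_left)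
  finally have "int q dvd (int g ^ k - 1) * S k (q - 1)"
    by (simp add: cong_iff_dvd_diff left_diff_distrib dvd_diff_commute)
  moreover have "\<not> int q dvd int g ^ k - 1"
    using ng by (metis cong_iff_dvd_diff cong_int_iff of_nat_1 of_nat_power)
  ultimately show ?thesis using q by (simp add: prime_dvd_mult_iff)
qed

lemma S_prime_pred_cong_minus_one:
  assumes q: "prime q" and d: "(q - 1) dvd k"
  shows "[S k (q - 1) = -1] (mod int q)"
proof -
  obtain c where c: "k = (q - 1) * c" using d by blast
  have "[S k (q - 1) = (\<Sum>i=1..q-1. 1)] (mod int q)"
    unfolding S_def
  proof (rule cong_sum)
    fix i assume "i \<in> {1..q - 1}"
    hence "\<not> q dvd i" by (auto dest: dvd_imp_le)
    hence "[(i ^ (q - 1)) ^ c = 1 ^ c] (mod q)" using fermat_theorem q cong_pow by blast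
    hence "[int (i ^ k) = int 1] (mod int q)" unfolding c power_mult cong_int_iff by simp
    thus "[int i ^ k = 1] (mod int q)" by simp
  qed
  moreover have "[(\<Sum>i=1..q-1. 1::int) = -1] (mod int q)"
    using prime_gt_1_nat[OF q] by (simp add: cong_iff_dvd_diff)
  ultimately show ?thesis by (rule cong_trans)
qed

lemma S_mult_cong: "[S k (t * q) = int t * S k q] (mod int q)"
proof (induction t)
  case 0
  show ?case by (simp add: S_def)
next
  case (Suc t)
  have "S k (Suc t * q) = S k (t * q) + (\<Sum>i=1..q. int (i + t * q) ^ k)"
    unfolding S_def
    using sum.ub_add_nat[of 1 "t * q" "\<lambda>i. int i ^ k" q]
      sum.shift_bounds_cl_nat_ivl[of "\<lambda>i. int i ^ k" 1 "t * q" q]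
    by (simp add: add.commute)
  also have "[\<dots> = int t * S k q + S k q] (mod int q)"
    unfolding S_def
    by (rule cong_add[OF Suc.IH[unfolded S_def]], rule cong_sum, rule cong_pow) (simp add: cong_def)
  finally show ?case by (simp add: algebra_simps)
qed

lemma S_cong_pred:
  assumes "0 < k"
  shows "[S k q = S k (q - 1)] (mod int q)"
proof (cases q)
  case (Suc r)
  then show ?thesis using assms by (simp add: S_def cong_iff_dvd_diff)
qed simp

lemma S_self_cong_neg_cofactor:
  assumes q: "prime q" and "0 < t" and "(q - 1) dvd t * q"
  shows "[S (t * q) (t * q) = - int t] (mod int q)"
proof -
  have "0 < t * q" using assms prime_gt_0_nat by simp
  have "[S (t * q) (t * q) = int t * S (t * q) q] (mod int q)" by (rule S_mult_cong)
  also have "[int t * S (t * q) q = int t * S (t * q) (q - 1)] (mod int q)"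
    by (rule cong_scalar_left, rule S_cong_pred) fact
  also have "[int t * S (t * q) (q - 1) = int t * -1] (mod int q)"
    by (rule cong_scalar_left, rule S_prime_pred_cong_minus_one) fact+
  finally show ?thesis by simp
qed

lemma S_self_prime_dvd:
  assumes q: "prime q" and "q dvd n" and nd: "\<not> (q - 1) dvd n"
  shows "int q dvd S n n"
proof -
  obtain t where n: "n = t * q" using \<open>q dvd n\<close> by (metis dvdE mult.commute)
  have "0 < n" using nd by (auto intro: gr0I)
  have "[S n n = int t * S n q] (mod int q)" unfolding n by (rule S_mult_cong)
  also have "[int t * S n q = int t * S n (q - 1)] (mod int q)"
    by (rule cong_scalar_left, rule S_cong_pred) fact
  finally show ?thesis
    using S_prime_pred_dvd[OF q nd] by (simp add: cong_dvd_iff)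
qed

text \<open>The divisibility form of \<open>1/m + (\<Sum>q\<in>prime_factors m. 1/q) = 1\<close>; note that \<open>m = 1\<close> qualifies.\<close>
definition primary_pseudoperfect :: "nat \<Rightarrow> bool" where
  "primary_pseudoperfect m \<longleftrightarrow> 0 < m \<and> (\<forall>q \<in> prime_factors m. q dvd m div q + 1)"

lemma primary_pseudoperfect_squarefree:
  assumes "primary_pseudoperfect m"
  shows "squarefree m"
proof -
  have "\<not> q\<^sup>2 dvd m" if q: "prime q" for q
  proof
    assume "q\<^sup>2 dvd m"
    then obtain r where r: "m = q * (q * r)" by (metis dvdE power2_eq_square mult.assoc)
    hence "q \<in> prime_factors m" using assms q by (auto simp: primary_pseudoperfect_def in_prime_factors_iff)
    hence "q dvd m div q + 1" using assms unfolding primary_pseudoperfect_def by blast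
    moreover have "m div q = q * r" using r q prime_gt_0_nat by simp
    ultimately have "q dvd q * r + 1" by simp
    hence "q dvd 1" using dvd_add_right_iff dvd_triv_left by blast
    with q show False by simp
  qed
  with assms show ?thesis by (simp add: squarefree_factorial_semiring primary_pseudoperfect_def)
qed

lemma squarefree_dvdI:
  fixes n x :: "'a :: factorial_semiring"
  assumes "squarefree n" and dvd: "\<And>q. prime q \<Longrightarrow> q dvd n \<Longrightarrow> q dvd x"
  shows "n dvd x"
proof (cases "x = 0")
  case False
  have "n \<noteq> 0" using assms(1) by auto
  show ?thesis
  proof (rule multiplicity_le_imp_dvd[OF \<open>n \<noteq> 0\<close>])
    fix q :: 'a assume q: "prime q"
    show "multiplicity q n \<le> multiplicity q x"
    proof (cases "q dvd n")
      case True
      hence "1 \<le> multiplicity q x"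
        using dvd q False by (simp add: multiplicity_geI)
      moreover have "multiplicity q n \<le> 1"
        using assms(1) q \<open>n \<noteq> 0\<close> squarefree_factorial_semiring'' by blast
      ultimately show ?thesis by linarith
    qed (simp add: not_dvd_imp_multiplicity_0)
  qed
qed simp

lemma mult_prime_mem_M1:
  assumes p: "prime p" and m: "primary_pseudoperfect m"
    and pred_dvd: "\<forall>q \<in> prime_factors m. (q - 1) dvd m"
    and "\<not> p dvd m" and "\<not> (p - 1) dvd m"
  shows "m * p \<in> M1 p"
proof -
  let ?n = "m * p"
  have "0 < m" using m by (simp add: primary_pseudoperfect_def)
  have "coprime (p - 1) p" using p prime_gt_0_nat coprime_diff_one_left_nat by blast
  hence "\<not> (p - 1) dvd ?n" using \<open>\<not> (p - 1) dvd m\<close> by (simp add: coprime_dvd_mult_left_iff)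
  hence at_p: "int p dvd S ?n ?n - int p" using S_self_prime_dvd[OF p] by simp
  have at_q: "int q dvd S ?n ?n - int p" if q: "q \<in> prime_factors m" for q
  proof -
    obtain c where mc: "m = c * q" using q by (metis dvdE in_prime_factors_imp_dvd mult.commute)
    have "prime q" using q by (simp add: in_prime_factors_iff)
    hence "0 < q" by (simp add: prime_gt_0_nat)
    moreover have "q dvd m div q + 1" using m q unfolding primary_pseudoperfect_def by blast
    ultimately have "q dvd c + 1" using mc by simp
    have "0 < c" using \<open>0 < m\<close> mc by simp
    have n: "?n = (c * p) * q" using mc by simp
    have "(q - 1) dvd ?n" using pred_dvd q by (simp add: dvd_mult2)
    hence "[S ?n ?n = - int (c * p)] (mod int q)"
      unfolding n using \<open>prime q\<close> \<open>0 < c\<close> p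
      by (intro S_self_cong_neg_cofactor) (auto simp: prime_gt_0_nat)
    \<comment> \<open>\<open>- c * p \<equiv> p\<close> because \<open>q\<close> divides \<open>c + 1\<close>\<close>
    moreover have "[int p = - int (c * p)] (mod int q)"
    proof -
      have "int q dvd int (c + 1) * int p"
        using \<open>q dvd c + 1\<close> by (simp only: int_dvd_int_iff dvd_mult2)
      then show ?thesis by (simp add: cong_iff_dvd_diff algebra_simps)
    qed
    ultimately show ?thesis by (metis cong_sym cong_trans cong_iff_dvd_diff)
  qed
  have "m dvd nat \<bar>S ?n ?n - int p\<bar>"
    using primary_pseudoperfect_squarefree[OF m]
    by (rule squarefree_dvdI) (use at_q \<open>0 < m\<close> in \<open>auto simp: in_prime_factors_iff dvd_nat_abs_iff\<close>)
  hence "int m * int p dvd S ?n ?n - int p"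
    using at_p \<open>\<not> p dvd m\<close> p
    by (intro divides_mult) (auto simp: dvd_nat_abs_iff prime_imp_coprime coprime_commute[of m p])
  moreover have "\<not> p\<^sup>2 dvd ?n"
    using \<open>\<not> p dvd m\<close> p prime_gt_0_nat by (auto simp: power2_eq_square)
  ultimately show ?thesis
    using \<open>0 < m\<close> p prime_gt_0_nat by (simp add: M1_def M_def cong_iff_dvd_diff)
qed

lemma divisors_prime_mult:
  fixes q r :: nat
  assumes "prime q"
  shows "{d. d dvd q * r} = {d. d dvd r} \<union> (*) q ` {d. d dvd r}"
proof (intro equalityI subsetI)
  fix d assume "d \<in> {d. d dvd q * r}"
  then obtain x y where d: "d = x * y" "x dvd q" "y dvd r" by (auto elim: dvd_productE)
  from \<open>x dvd q\<close> assms have "x = 1 \<or> x = q" by (simp add: prime_nat_iff)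
  with d show "d \<in> {d. d dvd r} \<union> (*) q ` {d. d dvd r}" by auto
qed auto

lemma divisors_1806:
  "{d. d dvd (1806::nat)} = {1, 2, 3, 6, 7, 14, 21, 42, 43, 86, 129, 258, 301, 602, 903, 1806}"
proof -
  have factor: "(1806::nat) = 2 * (3 * (7 * (43 * 1)))" by simp
  have "prime (2::nat)" "prime (3::nat)" "prime (7::nat)" "prime (43::nat)" by simp_all
  then show ?thesis by (simp only: factor divisors_prime_mult) (auto simp: insert_commute)
qed

lemma prime_pred_dvd_1806:
  assumes p: "prime p" and "(p - 1) dvd (1806::nat)"
  shows "p \<in> {2, 3, 7, 43}"
proof -
  \<comment> \<open>trial division: \<open>simp\<close> decides \<open>prime 1807\<close> (\<open>= 13 * 139\<close>) only very slowly\<close>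
  have "\<forall>d \<in> {d. d dvd 1806}.
      d + 1 \<in> {2, 3, 7, 43} \<or> (\<exists>q \<in> {2, 3, 7, 13::nat}. q dvd d + 1 \<and> q < d + 1)"
    unfolding divisors_1806 by simp
  moreover have "p = (p - 1) + 1" using prime_gt_0_nat[OF p] by simp
  ultimately have "p \<in> {2, 3, 7, 43} \<or> (\<exists>q \<in> {2, 3, 7, 13::nat}. q dvd p \<and> q < p)"
    using assms(2) by (metis mem_Collect_eq)
  moreover have "prime q" if "q \<in> {2, 3, 7, 13}" for q :: nat
    using that by auto
  ultimately show ?thesis
    using primes_dvd_imp_eq[OF _ p] by fastforce
qed

lemma prime_factors_1806: "prime_factors (1806::nat) = {2, 3, 7, 43}"
proof -
  have factor: "(1806::nat) = 2 * (3 * (7 * 43))" by simp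
  have "prime (2::nat)" "prime (3::nat)" "prime (7::nat)" "prime (43::nat)" by simp_all
  then show ?thesis by (simp only: factor prime_factors_product prime_prime_factors) auto
qed

text \<open>\<open>1, 2, 6, 42, 1806\<close> are the products of initial segments of Sylvester's sequence \<open>2, 3, 7, 43\<close>.\<close>
lemma sylvester_products_admissible:
  assumes "m \<in> {1, 2, 6, 42, 1806::nat}"
  shows "primary_pseudoperfect m" and "\<forall>q \<in> prime_factors m. (q - 1) dvd m" and "m dvd 1806"
proof -
  show "m dvd 1806" using assms by auto
  hence factors: "prime_factors m \<subseteq> {2, 3, 7, 43}"
    using dvd_prime_factors[of 1806 m] prime_factors_1806 by simp
  have checked: "\<forall>q \<in> {2, 3, 7, 43}. q dvd m \<longrightarrow> q dvd m div q + 1 \<and> (q - 1) dvd m"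
    using assms by auto
  have "q dvd m div q + 1 \<and> (q - 1) dvd m" if "q \<in> prime_factors m" for q
    using checked factors that in_prime_factors_imp_dvd[OF that] by blast
  moreover have "0 < m" using assms by auto
  ultimately show "primary_pseudoperfect m" "\<forall>q \<in> prime_factors m. (q - 1) dvd m"
    unfolding primary_pseudoperfect_def by blast+
qed

theorem mainTheorem17:
  fixes p :: nat
  assumes "prime p" and "p \<notin> {2, 3, 7, 43}"
  shows "{p, 2*p, 6*p, 42*p, 1806*p} \<subseteq> M1 p"
proof -
  have "m * p \<in> M1 p" if m: "m \<in> {1, 2, 6, 42, 1806}" for m
  proof (rule mult_prime_mem_M1[OF \<open>prime p\<close> sylvester_products_admissible(1,2)[OF m]])
    note dvd_1806 = dvd_trans[OF _ sylvester_products_admissible(3)[OF m]]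
    show "\<not> p dvd m"
    proof
      assume "p dvd m"
      hence "p \<in> prime_factors 1806" using dvd_1806 \<open>prime p\<close> by (simp add: in_prime_factors_iff)
      with assms show False unfolding prime_factors_1806 by simp
    qed
    show "\<not> (p - 1) dvd m"
      using prime_pred_dvd_1806[OF \<open>prime p\<close> dvd_1806] assms by blast
  qed
  from this[of 1] this[of 2] this[of 6] this[of 42] this[of 1806] show ?thesis by simp
qed

end
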